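(* Let $p$ be an odd prime and $a,s$ natural numbers with $a<p$. Let $\omega=\{\omega_1,\ldots,\omega_{sp}\}$ be a set partition of $\{1,\ldots,asp\}$ into $sp$ sets of size $a$. Then $\omega$ is fixed by $R_{as}$ if and only if there exist a set partition $\delta=\{\delta_1,\ldots,\delta_s\}$ of $\{1,\ldots,as\}$ into $s$ sets of size $a$ and $s$ sets $A_1,\ldots,A_s$ of $\omega$ such that for all $i\in\{1,\ldots,s\}$ and $j\in\{1,\ldots,as\}$, $$|A_i\cap\mathcal{O}_j|=\begin{cases}1 & \text{if } j\in\delta_i,\\ 0 & \text{if } j\notin\delta_i,\end{cases}$$ and $$\omega=\{A_1,A_1\sigma,\ldots,A_1\sigma^{p-1},A_2,\ldots,A_2\sigma^{p-1},\ldots,A_s,\ldots,A_s\sigma^{p-1}\}.$$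
   Context: For $j\geq 1$ let $z_j=(p(j-1)+1,p(j-1)+2,\ldots,pj)$, a $p$-cycle, and $\mathcal{O}_j=\{p(j-1)+1,\ldots,pj\}$ its support. Let $\sigma=z_1z_2\cdots z_{as}\in S_{asp}$ and $R_{as}=\langle\sigma\rangle$. Permutations act on the right, and $S_{asp}$ acts on set partitions of $\{1,\ldots,asp\}$ by acting on each element. *)

theory Defs
  imports Main "HOL-Library.Disjoint_Sets" "HOL-Computational_Algebra.Primes"
begin

definition orb :: "nat \<Rightarrow> nat \<Rightarrow> nat set" where
  "orb p j = {p * (j - 1) + 1 .. p * j}"

text \<open>sigma = z_1 z_2 ... z_n in S_{np}, z_j = (p(j-1)+1, ..., pj);
  as a function on nat (identity outside {1..np}).\<close>
definition sigma :: "nat \<Rightarrow> nat \<Rightarrow> nat \<Rightarrow> nat" where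
  "sigma p n x = (if 1 \<le> x \<and> x \<le> p * n
                  then (if x mod p = 0 then x + 1 - p else x + 1)
                  else x)"

definition setact :: "(nat \<Rightarrow> nat) \<Rightarrow> nat set \<Rightarrow> nat set" where
  "setact g A = g ` A"

text \<open>A set partition is fixed by R_n = <sigma> iff fixed by every power of sigma.\<close>
definition fixed_by_R :: "nat \<Rightarrow> nat \<Rightarrow> nat set set \<Rightarrow> bool" where
  "fixed_by_R p n \<omega> = (\<forall>k::nat. setact (sigma p n ^^ k) ` \<omega> = \<omega>)"

end

theory Submission
  imports Defs
begin

text \<open>
  The group \<open>R\<^sub>a\<^sub>s\<close> consists of the powers of \<open>\<sigma>\<close>, which has period \<open>p\<close> and rotates
  every cycle \<open>\<O>\<^sub>j\<close>. Let \<open>\<omega>\<close> be fixed. If \<open>B \<sigma>\<^sup>k = B\<close> for a block \<open>B\<close> and \<open>0 < k < p\<close>, then,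
  \<open>p\<close> being prime, already \<open>B \<sigma> = B\<close>, so \<open>B\<close> contains a whole cycle and has at least
  \<open>p > a\<close> elements. Hence every \<open>\<langle>\<sigma>\<rangle>\<close>-orbit of blocks has exactly \<open>p\<close> members, there are
  \<open>s\<close> orbits, and a block meets each cycle at most once: two of its points on one cycle
  differ by some \<open>\<sigma>\<^sup>k\<close>, so \<open>B \<sigma>\<^sup>k\<close> would meet \<open>B\<close>. For the same reason blocks from
  different orbits meet disjoint sets of cycles, so the sets \<open>\<delta>\<^sub>i\<close> of cycles met by
  orbit representatives \<open>A\<^sub>i\<close> partition \<open>{1..as}\<close>. Conversely, a union of orbits is fixed.
\<close>

section \<open>Orbits of sets under a map of finite period\<close>

definition set_orbit :: "('a \<Rightarrow> 'a) \<Rightarrow> 'a set \<Rightarrow> 'a set set" where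
  "set_orbit f B = range (\<lambda>k. (f ^^ k) ` B)"

lemma funpow_mod_period:
  assumes "f ^^ p = id"
  shows "f ^^ k = f ^^ (k mod p)"
proof -
  have "f ^^ k = f ^^ (k mod p) \<circ> (f ^^ p) ^^ (k div p)"
    by (simp add: funpow_mult funpow_add[symmetric])
  then show ?thesis using assms by simp
qed

lemma image_funpow_image: "(f ^^ m) ` (f ^^ k) ` B = (f ^^ (m + k)) ` B"
  by (simp add: funpow_add image_comp)

lemma funpow_image_in_set_orbit: "(f ^^ k) ` B \<in> set_orbit f B"
  by (simp add: set_orbit_def)

lemma self_in_set_orbit: "B \<in> set_orbit f B"
  using funpow_image_in_set_orbit[where k = 0] by simp

lemma set_orbit_eq_image_lessThan:
  assumes "f ^^ p = id" "p > 0"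
  shows "set_orbit f B = (\<lambda>k. (f ^^ k) ` B) ` {..<p}"
proof
  show "(\<lambda>k. (f ^^ k) ` B) ` {..<p} \<subseteq> set_orbit f B"
    unfolding set_orbit_def by blast
  have "(f ^^ k) ` B \<in> (\<lambda>k. (f ^^ k) ` B) ` {..<p}" for k
    using funpow_mod_period[OF assms(1), of k] assms(2) by auto
  then show "set_orbit f B \<subseteq> (\<lambda>k. (f ^^ k) ` B) ` {..<p}"
    unfolding set_orbit_def by blast
qed

lemma image_set_orbit: "(\<lambda>X. (f ^^ m) ` X) ` set_orbit f B = set_orbit f ((f ^^ m) ` B)"
proof -
  have "(f ^^ m) ` (f ^^ k) ` B = (f ^^ k) ` (f ^^ m) ` B" for k
    by (simp only: image_funpow_image add.commute)
  then show ?thesis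
    unfolding set_orbit_def image_image by simp
qed

lemma set_orbit_funpow_image:
  assumes "f ^^ p = id" "p > 0"
  shows "set_orbit f ((f ^^ m) ` B) = set_orbit f B"
proof
  show "set_orbit f ((f ^^ m) ` B) \<subseteq> set_orbit f B"
    unfolding set_orbit_def image_funpow_image by blast
  have "(f ^^ k) ` B = (f ^^ (k + (p - 1) * m)) ` (f ^^ m) ` B" for k
  proof -
    have "k + (p - 1) * m + m = k + m * p" using assms(2) by (cases p) auto
    then have "(f ^^ (k + (p - 1) * m)) ` (f ^^ m) ` B = (f ^^ (k + m * p)) ` B"
      by (simp only: image_funpow_image)
    also have "f ^^ (k + m * p) = f ^^ k"
      using funpow_mod_period[OF assms(1), of "k + m * p"] funpow_mod_period[OF assms(1), of k]
      by simp
    finally show ?thesis by simp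
  qed
  then show "set_orbit f B \<subseteq> set_orbit f ((f ^^ m) ` B)"
    unfolding set_orbit_def by blast
qed

lemma set_orbit_eq_if_mem:
  assumes "f ^^ p = id" "p > 0" "C \<in> set_orbit f B"
  shows "set_orbit f C = set_orbit f B"
  using assms(3) set_orbit_funpow_image[OF assms(1,2)] unfolding set_orbit_def by blast

lemma card_set_orbit:
  assumes "f ^^ p = id" "p > 0" and moves: "\<And>k. 0 < k \<Longrightarrow> k < p \<Longrightarrow> (f ^^ k) ` B \<noteq> B"
  shows "card (set_orbit f B) = p"
proof -
  have ordered: "u = v" if "v < p" "u \<le> v" "(f ^^ u) ` B = (f ^^ v) ` B" for u v
  proof (rule ccontr)
    assume "u \<noteq> v"
    have "(f ^^ (p - v + u)) ` B = (f ^^ (p - v)) ` (f ^^ u) ` B"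
      by (simp only: image_funpow_image)
    also have "\<dots> = (f ^^ (p - v)) ` (f ^^ v) ` B"
      by (simp only: that(3))
    also have "\<dots> = (f ^^ p) ` B"
      using that(1) by (simp only: image_funpow_image) simp
    also have "\<dots> = B"
      using assms(1) by simp
    finally have "(f ^^ (p - v + u)) ` B = B" .
    moreover have "(f ^^ (p - v + u)) ` B \<noteq> B"
      using that \<open>u \<noteq> v\<close> by (intro moves) linarith+
    ultimately show False by contradiction
  qed
  have "inj_on (\<lambda>k. (f ^^ k) ` B) {..<p}"
  proof (rule inj_onI)
    fix u v assume "u \<in> {..<p}" "v \<in> {..<p}" and eq: "(f ^^ u) ` B = (f ^^ v) ` B"
    then have "u < p" "v < p" by simp_all
    consider "u \<le> v" | "v \<le> u" by linarith
    then show "u = v"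
    proof cases
      case 1
      show ?thesis using ordered[OF \<open>v < p\<close> 1 eq] .
    next
      case 2
      show ?thesis using ordered[OF \<open>u < p\<close> 2 eq[symmetric]] by simp
    qed
  qed
  then show ?thesis
    unfolding set_orbit_eq_image_lessThan[OF assms(1,2)] by (simp only: card_image card_lessThan)
qed

lemma image_Union_set_orbit:
  assumes "f ^^ p = id" "p > 0"
  shows "(\<lambda>X. (f ^^ m) ` X) ` (\<Union>i\<in>I. set_orbit f (A i)) = (\<Union>i\<in>I. set_orbit f (A i))"
  by (simp only: image_UN image_set_orbit set_orbit_funpow_image[OF assms])

lemma funpow_image_eq_self:
  assumes "g ` B = B"
  shows "(g ^^ m) ` B = B"
proof (induction m)
  case (Suc m)
  have "(g ^^ Suc m) ` B = g ` (g ^^ m) ` B"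
    by (simp only: funpow.simps image_comp)
  also have "\<dots> = B"
    by (simp only: Suc.IH assms)
  finally show ?case .
qed simp

lemma coprime_funpow_image_eq_self:
  assumes "f ^^ p = id" "coprime k p" "(f ^^ k) ` B = B"
  shows "f ` B = B"
proof (cases "k = 0")
  case True
  then have "p = 1" using assms(2) by simp
  then show ?thesis using assms(1) by simp
next
  case False
  then obtain x y where bezout: "k * x = p * y + 1"
    using bezout_nat[of k p] assms(2) by auto
  have "f ^^ (k * x) = (f ^^ p) ^^ y \<circ> f ^^ 1"
    by (simp only: bezout funpow_mult funpow_add)
  then have "f ^^ (k * x) = f"
    using assms(1) by simp
  then show ?thesis
    using funpow_image_eq_self[OF assms(3), of x] by (simp add: funpow_mult)
qed

lemma setact_orbits_eq_Union_set_orbit: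
  assumes "f ^^ p = id" "p > 0"
  shows "{setact (f ^^ k) (A i) | i k. i \<in> I \<and> k < p} = (\<Union>i\<in>I. set_orbit f (A i))"
  unfolding set_orbit_eq_image_lessThan[OF assms] setact_def by blast

section \<open>The permutation \<open>\<sigma>\<close> and its cycles\<close>

definition cycle_index :: "nat \<Rightarrow> nat \<Rightarrow> nat" where
  "cycle_index p x = (x - 1) div p + 1"

lemma cycle_index_le_iff:
  assumes "p > 0" "1 \<le> x"
  shows "cycle_index p x \<le> n \<longleftrightarrow> x \<le> p * n"
proof -
  have "cycle_index p x \<le> n \<longleftrightarrow> (x - 1) div p < n"
    by (auto simp: cycle_index_def)
  also have "\<dots> \<longleftrightarrow> x - 1 < n * p"
    using assms(1) by (rule div_less_iff_less_mult)
  also have "\<dots> \<longleftrightarrow> x \<le> p * n"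
    using assms(2) by (auto simp: mult.commute)
  finally show ?thesis .
qed

lemma sigma_cycle_step:
  assumes "p > 0" "q < n" "r < p"
  shows "sigma p n (p * q + r + 1) = p * q + (r + 1) mod p + 1"
proof -
  have "p * q + r + 1 \<le> p * (q + 1)" using assms by simp
  also have "\<dots> \<le> p * n" using assms by (intro mult_le_mono2) simp
  finally have "p * q + r + 1 \<le> p * n" .
  moreover have "(p * q + r + 1) mod p = (r + 1) mod p"
    by (metis add.assoc mod_mult_self3 mult.commute)
  ultimately show ?thesis
    using assms unfolding sigma_def by (cases "r + 1 = p") auto
qed

lemma sigma_funpow:
  assumes "p > 0"
  shows "(sigma p n ^^ k) x = (if 1 \<le> x \<and> x \<le> p * n
     then p * ((x - 1) div p) + ((x - 1) mod p + k) mod p + 1 else x)"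
proof (induction k)
  case 0
  then show ?case by simp
next
  case (Suc k)
  show ?case
  proof (cases "1 \<le> x \<and> x \<le> p * n")
    case True
    have "(sigma p n ^^ Suc k) x = sigma p n (p * ((x - 1) div p) + ((x - 1) mod p + k) mod p + 1)"
      using Suc True by simp
    also have "\<dots> = p * ((x - 1) div p) + (((x - 1) mod p + k) mod p + 1) mod p + 1"
      using True cycle_index_le_iff[OF assms, of x n] assms unfolding cycle_index_def
      by (intro sigma_cycle_step) simp_all
    also have "(((x - 1) mod p + k) mod p + 1) mod p = ((x - 1) mod p + Suc k) mod p"
      by (simp add: mod_Suc_eq)
    finally show ?thesis using True by simp
  next
    case False
    then show ?thesis using Suc unfolding sigma_def by auto
  qed
qed

lemma sigma_funpow_period: "p > 0 \<Longrightarrow> sigma p n ^^ p = id"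
  by (rule ext) (simp add: sigma_funpow)

lemma mem_orb_iff:
  assumes "p > 0"
  shows "x \<in> orb p j \<longleftrightarrow> 1 \<le> x \<and> cycle_index p x = j"
proof (cases j)
  case 0
  then show ?thesis by (simp add: orb_def cycle_index_def)
next
  case (Suc i)
  have "(x - 1) div p = i \<longleftrightarrow> i \<le> (x - 1) div p \<and> (x - 1) div p < Suc i"
    by auto
  also have "\<dots> \<longleftrightarrow> i * p \<le> x - 1 \<and> x - 1 < Suc i * p"
    using assms by (simp only: less_eq_div_iff_mult_less_eq div_less_iff_less_mult)
  finally have div_iff: "(x - 1) div p = i \<longleftrightarrow> i * p \<le> x - 1 \<and> x - 1 < Suc i * p" .
  have "x \<in> orb p j \<longleftrightarrow> 1 \<le> x \<and> i * p \<le> x - 1 \<and> x - 1 < Suc i * p"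
    using Suc by (auto simp: orb_def mult.commute)
  then show ?thesis
    using Suc div_iff by (auto simp: cycle_index_def)
qed

lemma card_orb: "0 < j \<Longrightarrow> card (orb p j) = p"
  by (cases j) (simp_all add: orb_def)

lemma cycle_index_sigma_funpow:
  assumes "p > 0"
  shows "cycle_index p ((sigma p n ^^ k) x) = cycle_index p x"
proof (cases "1 \<le> x \<and> x \<le> p * n")
  case True
  have "((x - 1) mod p + k) mod p < p" using assms by simp
  then have "(p * ((x - 1) div p) + ((x - 1) mod p + k) mod p) div p = (x - 1) div p"
    using assms by simp
  then show ?thesis using True by (simp add: sigma_funpow[OF assms] cycle_index_def)
next
  case False
  then show ?thesis by (simp only: sigma_funpow[OF assms] if_False)
qed

lemma sigma_funpow_connects:
  assumes "p > 0" "1 \<le> x" "x \<le> p * n" "1 \<le> y" "y \<le> p * n"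
    and "cycle_index p x = cycle_index p y"
  shows "\<exists>k. (sigma p n ^^ k) x = y"
proof -
  define k where "k = (y - 1) mod p + p - (x - 1) mod p"
  have "((x - 1) mod p + k) mod p = (y - 1) mod p"
  proof -
    have "(x - 1) mod p + k = (y - 1) mod p + p"
      using mod_less_divisor[OF assms(1), of "x - 1"] unfolding k_def by linarith
    then show ?thesis by simp
  qed
  then have "(sigma p n ^^ k) x = p * ((y - 1) div p) + (y - 1) mod p + 1"
    using assms by (simp add: sigma_funpow[OF assms(1)] cycle_index_def)
  also have "\<dots> = y" using assms by simp
  finally show ?thesis by blast
qed

lemma orb_subset_if_sigma_image_eq_self:
  assumes "p > 0" "x \<in> B" "1 \<le> x" "x \<le> p * n" and invariant: "sigma p n ` B = B"
  shows "orb p (cycle_index p x) \<subseteq> B"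
proof
  fix y assume "y \<in> orb p (cycle_index p x)"
  then have y: "1 \<le> y" "cycle_index p x = cycle_index p y"
    using mem_orb_iff[OF assms(1)] by auto
  have "cycle_index p y \<le> n"
    using y(2) cycle_index_le_iff[OF assms(1,3)] assms(4) by simp
  then have "y \<le> p * n"
    using cycle_index_le_iff[OF assms(1) y(1)] by simp
  then obtain k where "(sigma p n ^^ k) x = y"
    using sigma_funpow_connects[OF assms(1,3,4) y(1)] y(2) by blast
  then have "y \<in> (sigma p n ^^ k) ` B" using assms(2) by blast
  then show "y \<in> B" by (simp only: funpow_image_eq_self[OF invariant])
qed

lemma sigma_funpow_image_neq:
  assumes "prime p" "B \<subseteq> {1..p * n}" "B \<noteq> {}" "card B < p" "0 < k" "k < p"
  shows "(sigma p n ^^ k) ` B \<noteq> B"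
proof
  assume fixed: "(sigma p n ^^ k) ` B = B"
  have "p > 0" using assms(1) prime_gt_0_nat by blast
  have "\<not> p dvd k" using assms(5,6) by (auto dest: dvd_imp_le)
  then have "coprime k p"
    using prime_imp_coprime[OF assms(1)] by (simp add: coprime_commute)
  then have invariant: "sigma p n ` B = B"
    using coprime_funpow_image_eq_self[OF sigma_funpow_period[OF \<open>p > 0\<close>] _ fixed] by blast
  obtain x where "x \<in> B" using assms(3) by blast
  then have "orb p (cycle_index p x) \<subseteq> B"
    using assms(2) by (intro orb_subset_if_sigma_image_eq_self[OF \<open>p > 0\<close> _ _ _ invariant]) auto
  moreover have "finite B" using assms(2) finite_subset by blast
  ultimately have "card (orb p (cycle_index p x)) \<le> card B"
    by (simp only: card_mono)
  then have "p \<le> card B"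
    by (simp add: card_orb cycle_index_def)
  then show False using assms(4) by simp
qed

lemma cycle_index_image_set_orbit:
  assumes "p > 0" "B \<in> set_orbit (sigma p n) C"
  shows "cycle_index p ` B = cycle_index p ` C"
proof -
  obtain k where "B = (sigma p n ^^ k) ` C"
    using assms(2) unfolding set_orbit_def by blast
  then show ?thesis
    by (simp add: image_image cycle_index_sigma_funpow[OF assms(1)])
qed

lemma fixed_by_R_Union_set_orbit:
  assumes "p > 0"
  shows "fixed_by_R p n (\<Union>i\<in>I. set_orbit (sigma p n) (A i))"
  unfolding fixed_by_R_def setact_def
  by (intro allI image_Union_set_orbit[OF sigma_funpow_period[OF assms] assms])

section \<open>Partitions fixed by \<open>\<sigma>\<close> with blocks smaller than \<open>p\<close>\<close>

lemma obtain_representatives: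
  assumes "finite X" "card (g ` X) = s"
  obtains A where "A ` {1..s} \<subseteq> X" "bij_betw (g \<circ> A) {1..s} (g ` X)"
proof -
  obtain h where h: "bij_betw h {1..s} (g ` X)"
    using ex_bij_betw_nat_finite_1[of "g ` X"] assms by auto
  define A where "A i = (SOME x. x \<in> X \<and> g x = h i)" for i
  have A: "A i \<in> X \<and> g (A i) = h i" if "i \<in> {1..s}" for i
  proof -
    have "h i \<in> g ` X" using bij_betwE[OF h] that by blast
    then have "\<exists>x. x \<in> X \<and> g x = h i" by (force simp: image_iff)
    then show ?thesis unfolding A_def by (rule someI_ex)
  qed
  show thesis
  proof
    show "A ` {1..s} \<subseteq> X" using A by blast
    show "bij_betw (g \<circ> A) {1..s} (g ` X)"
      using h by (rule bij_betw_cong[THEN iffD1, rotated]) (simp add: A)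
  qed
qed

lemma card_fiber_inj_on:
  assumes "inj_on g A"
  shows "card {x \<in> A. g x = j} = (if j \<in> g ` A then 1 else 0)"
proof (cases "j \<in> g ` A")
  case True
  then obtain x where "x \<in> A" "g x = j" by blast
  then have "{x \<in> A. g x = j} = {x}" using assms by (auto dest: inj_onD)
  then show ?thesis using True by simp
next
  case False
  then have "{x \<in> A. g x = j} = {}" by blast
  then show ?thesis using False by (simp only: card.empty if_False)
qed

locale small_fixed_partition =
  fixes p n :: nat and \<omega> :: "nat set set"
  assumes prime: "prime p"
    and partition: "partition_on {1..p * n} \<omega>"
    and small_blocks: "\<And>B. B \<in> \<omega> \<Longrightarrow> card B < p"
    and fixed: "fixed_by_R p n \<omega>"
begin

lemma p_pos: "p > 0"
  using prime prime_gt_0_nat by blast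

lemma period: "sigma p n ^^ p = id"
  using sigma_funpow_period[OF p_pos] .

lemma block_subset: "B \<in> \<omega> \<Longrightarrow> B \<subseteq> {1..p * n}"
  using partition_onD1[OF partition] by blast

lemma block_nonempty: "B \<in> \<omega> \<Longrightarrow> B \<noteq> {}"
  using partition_onD3[OF partition] by blast

lemma block_eqI: "B \<in> \<omega> \<Longrightarrow> C \<in> \<omega> \<Longrightarrow> x \<in> B \<Longrightarrow> x \<in> C \<Longrightarrow> B = C"
  using partition_onD2[OF partition] unfolding disjoint_def by blast

lemma sigma_funpow_image_block: "B \<in> \<omega> \<Longrightarrow> (sigma p n ^^ k) ` B \<in> \<omega>"
  using fixed imageI[of B \<omega> "setact (sigma p n ^^ k)"]
  unfolding fixed_by_R_def by (simp add: setact_def)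

lemma set_orbit_subset: "B \<in> \<omega> \<Longrightarrow> set_orbit (sigma p n) B \<subseteq> \<omega>"
  unfolding set_orbit_def using sigma_funpow_image_block by blast

lemma card_set_orbit_block: "B \<in> \<omega> \<Longrightarrow> card (set_orbit (sigma p n) B) = p"
  by (intro card_set_orbit[OF period p_pos] sigma_funpow_image_neq[OF prime]
      block_subset block_nonempty small_blocks)

lemma same_orbit_if_same_cycle:
  assumes "B \<in> \<omega>" "C \<in> \<omega>" "x \<in> B" "y \<in> C" "cycle_index p x = cycle_index p y"
  shows "C \<in> set_orbit (sigma p n) B"
proof -
  have "x \<in> {1..p * n}" "y \<in> {1..p * n}"
    using assms block_subset by blast+
  then obtain k where "(sigma p n ^^ k) x = y"
    using sigma_funpow_connects[OF p_pos, of x n y] assms(5) by auto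
  then have "y \<in> (sigma p n ^^ k) ` B" using assms(3) by blast
  then have "(sigma p n ^^ k) ` B = C"
    using block_eqI[OF sigma_funpow_image_block[OF assms(1)] assms(2) _ assms(4)] by blast
  then show ?thesis using funpow_image_in_set_orbit by metis
qed

lemma inj_on_cycle_index: "B \<in> \<omega> \<Longrightarrow> inj_on (cycle_index p) B"
proof (rule inj_onI, rule ccontr)
  fix x y assume B: "B \<in> \<omega>" and xy: "x \<in> B" "y \<in> B" "cycle_index p x = cycle_index p y" "x \<noteq> y"
  have "x \<in> {1..p * n}" "y \<in> {1..p * n}"
    using B xy block_subset by blast+
  then obtain k where "(sigma p n ^^ k) x = y"
    using sigma_funpow_connects[OF p_pos, of x n y] xy(3) by auto
  then have y: "(sigma p n ^^ (k mod p)) x = y"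
    using funpow_mod_period[OF period] by metis
  then have "0 < k mod p" using xy(4) by (cases "k mod p") auto
  then have "(sigma p n ^^ (k mod p)) ` B \<noteq> B"
    using sigma_funpow_image_neq[OF prime block_subset block_nonempty small_blocks] B p_pos by simp
  moreover have "y \<in> (sigma p n ^^ (k mod p)) ` B" using y xy(1) by blast
  ultimately show False
    using block_eqI[OF sigma_funpow_image_block[OF B] B _ xy(2)] by blast
qed

lemma Union_set_orbits: "\<Union> (set_orbit (sigma p n) ` \<omega>) = \<omega>"
  using set_orbit_subset self_in_set_orbit by blast

lemma card_set_orbits: "p * card (set_orbit (sigma p n) ` \<omega>) = card \<omega>"
proof -
  have "finite \<omega>"
    using finite_elements[OF _ partition] by simp
  moreover have "c1 \<inter> c2 = {}"
    if "c1 \<in> set_orbit (sigma p n) ` \<omega>" "c2 \<in> set_orbit (sigma p n) ` \<omega>" "c1 \<noteq> c2" for c1 c2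
    using that set_orbit_eq_if_mem[OF period p_pos] by blast
  moreover have "card c = p" if "c \<in> set_orbit (sigma p n) ` \<omega>" for c
    using that card_set_orbit_block by blast
  ultimately show ?thesis
    using card_partition[of "set_orbit (sigma p n) ` \<omega>" p] by (simp add: Union_set_orbits)
qed

lemma cycle_index_blocks_cover: "(\<Union>B\<in>\<omega>. cycle_index p ` B) = {1..n}"
proof
  show "(\<Union>B\<in>\<omega>. cycle_index p ` B) \<subseteq> {1..n}"
    using block_subset cycle_index_le_iff[OF p_pos] by (fastforce simp: cycle_index_def)
  show "{1..n} \<subseteq> (\<Union>B\<in>\<omega>. cycle_index p ` B)"
  proof
    fix j assume j: "j \<in> {1..n}"
    define x where "x = p * (j - 1) + 1"
    have "cycle_index p x = j"
      using j p_pos unfolding x_def cycle_index_def by simp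
    moreover have "x \<le> p * n"
      using cycle_index_le_iff[OF p_pos, of x n] j calculation unfolding x_def by simp
    then have "x \<in> \<Union>\<omega>"
      using partition_onD1[OF partition] unfolding x_def by auto
    ultimately show "j \<in> (\<Union>B\<in>\<omega>. cycle_index p ` B)" by blast
  qed
qed

lemma card_block_inter_orb:
  assumes "B \<in> \<omega>"
  shows "card (B \<inter> orb p j) = (if j \<in> cycle_index p ` B then 1 else 0)"
proof -
  have "B \<inter> orb p j = {x \<in> B. cycle_index p x = j}"
    using block_subset[OF assms] mem_orb_iff[OF p_pos] by fastforce
  then show ?thesis
    using card_fiber_inj_on[OF inj_on_cycle_index[OF assms]] by simp
qed

lemma obtain_orbit_representatives:
  assumes "card \<omega> = s * p"
  obtains A where "A ` {1..s} \<subseteq> \<omega>" "inj_on (\<lambda>i. set_orbit (sigma p n) (A i)) {1..s}"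
    "\<omega> = (\<Union>i\<in>{1..s}. set_orbit (sigma p n) (A i))"
proof -
  have "finite \<omega>"
    using finite_elements[OF _ partition] by simp
  moreover have "card (set_orbit (sigma p n) ` \<omega>) = s"
    using card_set_orbits assms p_pos by (simp add: mult.commute)
  ultimately obtain A where A: "A ` {1..s} \<subseteq> \<omega>"
    and bij: "bij_betw (set_orbit (sigma p n) \<circ> A) {1..s} (set_orbit (sigma p n) ` \<omega>)"
    by (rule obtain_representatives)
  have "\<omega> = \<Union> ((set_orbit (sigma p n) \<circ> A) ` {1..s})"
    using bij Union_set_orbits by (simp add: bij_betw_def)
  then show thesis
    using that A bij by (simp add: bij_betw_def comp_def)
qed

context
  fixes I :: "nat set" and A :: "nat \<Rightarrow> nat set"
  assumes representatives: "A ` I \<subseteq> \<omega>"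
    and representatives_inj: "inj_on (\<lambda>i. set_orbit (sigma p n) (A i)) I"
    and representatives_cover: "\<omega> = (\<Union>i\<in>I. set_orbit (sigma p n) (A i))"
begin

lemma cycle_index_images_disjoint:
  assumes "i \<in> I" "i' \<in> I" "i \<noteq> i'"
  shows "cycle_index p ` A i \<inter> cycle_index p ` A i' = {}"
proof (rule ccontr)
  assume "cycle_index p ` A i \<inter> cycle_index p ` A i' \<noteq> {}"
  then obtain j where "j \<in> cycle_index p ` A i" "j \<in> cycle_index p ` A i'"
    by blast
  then obtain x y where xy: "x \<in> A i" "y \<in> A i'" "cycle_index p x = cycle_index p y"
    by blast
  have "A i \<in> \<omega>" "A i' \<in> \<omega>"
    using representatives assms by blast+
  then have "A i' \<in> set_orbit (sigma p n) (A i)"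
    using xy by (rule same_orbit_if_same_cycle)
  then have "set_orbit (sigma p n) (A i') = set_orbit (sigma p n) (A i)"
    by (rule set_orbit_eq_if_mem[OF period p_pos])
  then show False
    using inj_onD[OF representatives_inj _ assms(2,1)] assms(3) by blast
qed

lemma Union_cycle_index_images: "(\<Union>i\<in>I. cycle_index p ` A i) = {1..n}"
proof -
  have "(\<Union>B\<in>set_orbit (sigma p n) (A i). cycle_index p ` B) = cycle_index p ` A i" for i
  proof
    show "(\<Union>B\<in>set_orbit (sigma p n) (A i). cycle_index p ` B) \<subseteq> cycle_index p ` A i"
      using cycle_index_image_set_orbit[OF p_pos] by blast
    show "cycle_index p ` A i \<subseteq> (\<Union>B\<in>set_orbit (sigma p n) (A i). cycle_index p ` B)"
      using self_in_set_orbit by blast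
  qed
  then have "(\<Union>B\<in>\<omega>. cycle_index p ` B) = (\<Union>i\<in>I. cycle_index p ` A i)"
    unfolding representatives_cover UN_UN_flatten by simp
  then show ?thesis
    using cycle_index_blocks_cover by simp
qed

lemma partition_on_cycle_index_images:
  "partition_on {1..n} ((\<lambda>i. cycle_index p ` A i) ` I)"
proof (rule partition_onI)
  show "\<Union> ((\<lambda>i. cycle_index p ` A i) ` I) = {1..n}"
    by (rule Union_cycle_index_images)
  show "disjnt P Q"
    if "P \<in> (\<lambda>i. cycle_index p ` A i) ` I" "Q \<in> (\<lambda>i. cycle_index p ` A i) ` I" "P \<noteq> Q" for P Q
    using that cycle_index_images_disjoint unfolding disjnt_def by blast
  show "{} \<notin> (\<lambda>i. cycle_index p ` A i) ` I"
  proof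
    assume "{} \<in> (\<lambda>i. cycle_index p ` A i) ` I"
    then obtain i where "i \<in> I" "A i = {}" by auto
    then show False using representatives block_nonempty by blast
  qed
qed

lemma inj_on_cycle_index_images: "inj_on (\<lambda>i. cycle_index p ` A i) I"
proof (rule inj_onI, rule ccontr)
  fix i i' assume i: "i \<in> I" "i' \<in> I" and eq: "cycle_index p ` A i = cycle_index p ` A i'"
    and "i \<noteq> i'"
  then have "cycle_index p ` A i = {}"
    using cycle_index_images_disjoint[OF i \<open>i \<noteq> i'\<close>] by (simp only: Int_absorb)
  then show False
    using representatives i(1) block_nonempty by blast
qed

end

lemma orbit_decomposition:
  assumes "card \<omega> = s * p"
  obtains \<delta> A where "partition_on {1..n} (\<delta> ` {1..s})" "card (\<delta> ` {1..s}) = s"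
    "\<forall>i\<in>{1..s}. card (\<delta> i) = card (A i)" "\<forall>i\<in>{1..s}. A i \<in> \<omega>"
    "\<forall>i\<in>{1..s}. \<forall>j. card (A i \<inter> orb p j) = (if j \<in> \<delta> i then 1 else 0)"
    "\<omega> = {setact (sigma p n ^^ k) (A i) | i k. i \<in> {1..s} \<and> k < p}"
proof -
  obtain A where A: "A ` {1..s} \<subseteq> \<omega>"
    and A_inj: "inj_on (\<lambda>i. set_orbit (sigma p n) (A i)) {1..s}"
    and A_cover: "\<omega> = (\<Union>i\<in>{1..s}. set_orbit (sigma p n) (A i))"
    by (rule obtain_orbit_representatives[OF assms])
  show thesis
  proof (rule that[of "\<lambda>i. cycle_index p ` A i" A])
    show "partition_on {1..n} ((\<lambda>i. cycle_index p ` A i) ` {1..s})"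
      by (rule partition_on_cycle_index_images[OF A A_inj A_cover])
    show "card ((\<lambda>i. cycle_index p ` A i) ` {1..s}) = s"
      using card_image[OF inj_on_cycle_index_images[OF A A_inj A_cover]] by simp
    show "\<forall>i\<in>{1..s}. card (cycle_index p ` A i) = card (A i)"
      using A inj_on_cycle_index card_image by blast
    show "\<forall>i\<in>{1..s}. A i \<in> \<omega>"
      using A by blast
    show "\<forall>i\<in>{1..s}. \<forall>j. card (A i \<inter> orb p j) = (if j \<in> cycle_index p ` A i then 1 else 0)"
      using A card_block_inter_orb by blast
    show "\<omega> = {setact (sigma p n ^^ k) (A i) | i k. i \<in> {1..s} \<and> k < p}"
      unfolding A_cover by (rule setact_orbits_eq_Union_set_orbit[OF period p_pos, symmetric])
  qed
qed

end

theorem lemma3p2: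
  fixes p a s :: nat and \<omega> :: "nat set set"
  assumes "prime p" and "odd p" and "a < p"
    and "partition_on {1 .. a * s * p} \<omega>" and "card \<omega> = s * p"
    and "\<forall>B\<in>\<omega>. card B = a"
  shows "fixed_by_R p (a * s) \<omega> \<longleftrightarrow>
    (\<exists>(\<delta> :: nat \<Rightarrow> nat set) (A :: nat \<Rightarrow> nat set).
        partition_on {1 .. a * s} (\<delta> ` {1..s}) \<and> card (\<delta> ` {1..s}) = s \<and>
        (\<forall>i\<in>{1..s}. card (\<delta> i) = a) \<and>
        (\<forall>i\<in>{1..s}. A i \<in> \<omega>) \<and>
        (\<forall>i\<in>{1..s}. \<forall>j\<in>{1 .. a * s}.
            card (A i \<inter> orb p j) = (if j \<in> \<delta> i then 1 else 0)) \<and>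
        \<omega> = {setact (sigma p (a * s) ^^ k) (A i) | i k. i \<in> {1..s} \<and> k < p})"
    (is "_ \<longleftrightarrow> ?decomposition")
proof
  assume "fixed_by_R p (a * s) \<omega>"
  moreover have "partition_on {1..p * (a * s)} \<omega>"
    using assms(4) by (simp add: ac_simps)
  ultimately interpret small_fixed_partition p "a * s" \<omega>
    using assms(1,3,6) by unfold_locales auto
  obtain \<delta> A where "partition_on {1..a * s} (\<delta> ` {1..s})" "card (\<delta> ` {1..s}) = s"
    and card: "\<forall>i\<in>{1..s}. card (\<delta> i) = card (A i)" and A: "\<forall>i\<in>{1..s}. A i \<in> \<omega>"
    and "\<forall>i\<in>{1..s}. \<forall>j. card (A i \<inter> orb p j) = (if j \<in> \<delta> i then 1 else 0)"
    and "\<omega> = {setact (sigma p (a * s) ^^ k) (A i) | i k. i \<in> {1..s} \<and> k < p}"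
    by (rule orbit_decomposition[OF assms(5)]) (rule that)
  moreover have "\<forall>i\<in>{1..s}. card (\<delta> i) = a"
    using card A assms(6) by simp
  ultimately show ?decomposition
    by (intro exI[of _ \<delta>] exI[of _ A] conjI) blast+
next
  assume ?decomposition
  then obtain A where "\<omega> = {setact (sigma p (a * s) ^^ k) (A i) | i k. i \<in> {1..s} \<and> k < p}"
    by blast
  have "p > 0"
    using assms(1) prime_gt_0_nat by blast
  note orbits = setact_orbits_eq_Union_set_orbit[OF sigma_funpow_period[OF this] this]
  have "\<omega> = (\<Union>i\<in>{1..s}. set_orbit (sigma p (a * s)) (A i))"
    unfolding orbits[symmetric] by fact
  then show "fixed_by_R p (a * s) \<omega>"
    using fixed_by_R_Union_set_orbit[OF \<open>p > 0\<close>] by simp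
qed

end
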